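(* Let $K$ be a division ring. Then $K[G]$ is directly finite for every group $G$ if and only if for every $\mathrm{ULIE}_K$ group $\Gamma$, the group ring $K[\Gamma]$ is directly finite.
   Context: $K$ is a nonzero division ring; $K[G]$ is the group ring. A ring is directly finite if $xy=1$ implies $yx=1$. For integers $m,n\ge2$ let $S_{m,n}=\{0,\dots,m-1\}\times\{0,\dots,n-1\}$; for a partition $\pi$ of $S_{m,n}$ write $(i,j)\sim_\pi(i',j')$ if the two pairs lie in the same block. $\Gamma_\pi$ is the group with generators $a_0,\dots,a_{m-1},b_0,\dots,b_{n-1}$ and relations $a_0=b_0=1$ and $a_ib_j=a_{i'}b_{j'}$ whenever $(i,j)\sim_\pi(i',j')$. $\pi$ is nondegenerate if in $\Gamma_\pi$ the $a_i$ are pairwise distinct and the $b_j$ are pairwise distinct. Given nonzero $r_0,\dots,r_{m-1},s_0,\dots,s_{n-1}\in K$, $\pi$ is realizable with them if for every block $E$, $\sum_{(i,j)\in E}r_is_j$ equals $1$ if $(0,0)\in E$ and $0$ otherwise. With partitions ordered by refinement, $\pi$ is minimally realizable over $K$ if for some choice of nonzero $r_i,s_j\in K$ it is minimal among the partitions of $S_{m,n}$ realizable with those elements. An $\mathrm{ULIE}_K$ group is a group $\Gamma_\pi$ for some $m,n\ge2$ and some nondegenerate partition $\pi$ of $S_{m,n}$ minimally realizable over $K$. *)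

theory Defs
  imports "HOL-Algebra.Group" "HOL-Library.Disjoint_Sets"
begin

definition gr_elem :: "('g, 'b) monoid_scheme \<Rightarrow> ('g \<Rightarrow> 'k::division_ring) \<Rightarrow> bool" where
  "gr_elem G x \<longleftrightarrow> finite {g \<in> carrier G. x g \<noteq> 0} \<and> (\<forall>g. g \<notin> carrier G \<longrightarrow> x g = 0)"

definition gr_mult :: "('g, 'b) monoid_scheme \<Rightarrow> ('g \<Rightarrow> 'k::division_ring) \<Rightarrow> ('g \<Rightarrow> 'k) \<Rightarrow> 'g \<Rightarrow> 'k" where
  "gr_mult G x y = (\<lambda>g. if g \<in> carrier G
      then (\<Sum>h \<in> {h \<in> carrier G. x h \<noteq> 0}. x h * y (inv\<^bsub>G\<^esub> h \<otimes>\<^bsub>G\<^esub> g))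
      else 0)"

definition gr_one :: "('g, 'b) monoid_scheme \<Rightarrow> 'g \<Rightarrow> 'k::division_ring" where
  "gr_one G = (\<lambda>g. if g = \<one>\<^bsub>G\<^esub> then 1 else 0)"

definition group_ring_directly_finite :: "'k::division_ring itself \<Rightarrow> ('g, 'b) monoid_scheme \<Rightarrow> bool" where
  "group_ring_directly_finite TYPE('k) G \<longleftrightarrow>
     (\<forall>x y :: 'g \<Rightarrow> 'k. gr_elem G x \<and> gr_elem G y \<and> gr_mult G x y = gr_one G
        \<longrightarrow> gr_mult G y x = gr_one G)"

text \<open>Words: lists of letters (generator, exponent sign); True = +1, False = -1.\<close>
type_synonym 'x word = "('x \<times> bool) list"

inductive_set word_eq :: "('x word \<times> 'x word) set \<Rightarrow> ('x word \<times> 'x word) set"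
  for R :: "('x word \<times> 'x word) set" where
  weq_refl: "(w, w) \<in> word_eq R"
| weq_sym: "(v, w) \<in> word_eq R \<Longrightarrow> (w, v) \<in> word_eq R"
| weq_trans: "(u, v) \<in> word_eq R \<Longrightarrow> (v, w) \<in> word_eq R \<Longrightarrow> (u, w) \<in> word_eq R"
| weq_cancel: "(u @ [(x, e), (x, \<not> e)] @ v, u @ v) \<in> word_eq R"
| weq_rel: "(l, r) \<in> R \<Longrightarrow> (u @ l @ v, u @ r @ v) \<in> word_eq R"

definition word_class :: "('x word \<times> 'x word) set \<Rightarrow> 'x word \<Rightarrow> 'x word set" where
  "word_class R w = word_eq R `` {w}"

definition presented_group :: "'x set \<Rightarrow> ('x word \<times> 'x word) set \<Rightarrow> 'x word set monoid" where
  "presented_group X R =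
     \<lparr> carrier = {word_class R w | w. fst ` set w \<subseteq> X},
       mult = (\<lambda>A B. \<Union>a\<in>A. \<Union>b\<in>B. word_class R (a @ b)),
       one = word_class R [] \<rparr>"

definition S_set :: "nat \<Rightarrow> nat \<Rightarrow> (nat \<times> nat) set" where
  "S_set m n = {..<m} \<times> {..<n}"

text \<open>Generators: Inl i is a_i, Inr j is b_j.\<close>
definition Gamma_gens :: "nat \<Rightarrow> nat \<Rightarrow> (nat + nat) set" where
  "Gamma_gens m n = Inl ` {..<m} \<union> Inr ` {..<n}"

definition Gamma_rels :: "(nat \<times> nat) set set \<Rightarrow> ((nat + nat) word \<times> (nat + nat) word) set" where
  "Gamma_rels P =
     {([(Inl 0, True)], []), ([(Inr 0, True)], [])} \<union>
     {([(Inl i, True), (Inr j, True)], [(Inl i', True), (Inr j', True)]) | i j i' j'.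
        \<exists>E\<in>P. (i, j) \<in> E \<and> (i', j') \<in> E}"

definition Gamma :: "nat \<Rightarrow> nat \<Rightarrow> (nat \<times> nat) set set \<Rightarrow> (nat + nat) word set monoid" where
  "Gamma m n P = presented_group (Gamma_gens m n) (Gamma_rels P)"

definition nondegenerate :: "nat \<Rightarrow> nat \<Rightarrow> (nat \<times> nat) set set \<Rightarrow> bool" where
  "nondegenerate m n P \<longleftrightarrow>
     (\<forall>i<m. \<forall>i'<m. i \<noteq> i' \<longrightarrow>
        word_class (Gamma_rels P) [(Inl i, True)] \<noteq> word_class (Gamma_rels P) [(Inl i', True)]) \<and>
     (\<forall>j<n. \<forall>j'<n. j \<noteq> j' \<longrightarrow>
        word_class (Gamma_rels P) [(Inr j, True)] \<noteq> word_class (Gamma_rels P) [(Inr j', True)])"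

definition realizable :: "(nat \<times> nat) set set \<Rightarrow> (nat \<Rightarrow> 'k::division_ring) \<Rightarrow> (nat \<Rightarrow> 'k) \<Rightarrow> bool" where
  "realizable P r s \<longleftrightarrow>
     (\<forall>E\<in>P. (\<Sum>(i, j)\<in>E. r i * s j) = (if (0, 0) \<in> E then 1 else 0))"

definition refines :: "'a set set \<Rightarrow> 'a set set \<Rightarrow> bool" where
  "refines P Q \<longleftrightarrow> (\<forall>E\<in>P. \<exists>F\<in>Q. E \<subseteq> F)"

definition minimally_realizable ::
    "'k::division_ring itself \<Rightarrow> nat \<Rightarrow> nat \<Rightarrow> (nat \<times> nat) set set \<Rightarrow> bool" where
  "minimally_realizable TYPE('k) m n P \<longleftrightarrow>
     (\<exists>r s :: nat \<Rightarrow> 'k.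
        (\<forall>i<m. r i \<noteq> 0) \<and> (\<forall>j<n. s j \<noteq> 0) \<and> realizable P r s \<and>
        (\<forall>Q. partition_on (S_set m n) Q \<and> realizable Q r s \<and> refines Q P \<longrightarrow> Q = P))"

definition ULIE_partition :: "'k::division_ring itself \<Rightarrow> nat \<Rightarrow> nat \<Rightarrow> (nat \<times> nat) set set \<Rightarrow> bool" where
  "ULIE_partition TYPE('k) m n P \<longleftrightarrow>
     2 \<le> m \<and> 2 \<le> n \<and> partition_on (S_set m n) P \<and> nondegenerate m n P \<and>
     minimally_realizable TYPE('k) m n P"

end

theory Submission
  imports Defs "HOL-Algebra.Coset" "HOL-Library.Countable_Set" "HOL-Combinatorics.Transposition"
begin

(*
  If K[G] is directly finite for every group on the infinite type 'g, then in particular for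
  every countable group, such as each Gamma_pi, after transporting it into 'g.

  Conversely, let xy = 1 in K[G] with x = sum r_i g_i and y = sum s_j h_j, indexed so that
  g_0 h_0 = 1. If x or y is a monomial, yx = 1 follows by conjugation. Otherwise xy = 1 says that
  the partition of the index pairs (i, j) by the value g_i h_j is realizable with r, s; a minimal
  realizable refinement pi of it is nondegenerate, because Gamma_pi maps to G by
  a_i |-> g_i g_0^-1, b_j |-> g_0 h_j. So Gamma_pi is a ULIE group. In K[Gamma_pi] we have
  (sum r_i a_i)(sum s_j b_j) = 1, hence (sum s_j b_j)(sum r_i a_i) = 1, and the image of this
  identity in G is g_0 (yx) g_0^-1 = 1.
*)

subsection \<open>Presented groups\<close>

lemma word_eq_append:
  assumes "(v, w) \<in> word_eq R"
  shows "(u @ v @ z, u @ w @ z) \<in> word_eq R"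
  using assms
proof (induction rule: word_eq.induct)
  case (weq_cancel u' x e v')
  from word_eq.weq_cancel[of "u @ u'" x e "v' @ z" R] show ?case by simp
next
  case (weq_rel l r u' v')
  from word_eq.weq_rel[OF weq_rel, of "u @ u'" "v' @ z"] show ?case by simp
qed (auto intro: word_eq.intros)

lemma word_eq_append_cong:
  assumes "(a, a') \<in> word_eq R" "(b, b') \<in> word_eq R"
  shows "(a @ b, a' @ b') \<in> word_eq R"
  using word_eq_append[OF assms(1), of "[]" b] word_eq_append[OF assms(2), of a' "[]"]
  by (simp add: word_eq.weq_trans)

lemma equiv_word_eq: "equiv UNIV (word_eq R)"
  unfolding equiv_def refl_on_def sym_def trans_def by (auto intro: word_eq.intros)

lemma word_class_eq_iff: "word_class R v = word_class R w \<longleftrightarrow> (v, w) \<in> word_eq R"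
  unfolding word_class_def using equiv_class_eq_iff[OF equiv_word_eq] by blast

lemma word_class_relation:
  "(l, r) \<in> R \<Longrightarrow> word_class R l = word_class R r"
  using word_eq.weq_rel[of l r R "[]" "[]"] by (simp add: word_class_eq_iff)

lemma presented_group_mult:
  "word_class R u \<otimes>\<^bsub>presented_group X R\<^esub> word_class R v = word_class R (u @ v)"
proof -
  have "word_class R (a @ b) = word_class R (u @ v)"
    if "a \<in> word_class R u" "b \<in> word_class R v" for a b
  proof -
    from that have "(u @ v, a @ b) \<in> word_eq R"
      by (simp add: word_class_def word_eq_append_cong)
    then show ?thesis unfolding word_class_eq_iff by (rule word_eq.weq_sym)
  qed
  moreover have "u \<in> word_class R u" "v \<in> word_class R v"
    by (simp_all add: word_class_def word_eq.weq_refl)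
  ultimately have "(\<Union>a\<in>word_class R u. \<Union>b\<in>word_class R v. word_class R (a @ b))
      = word_class R (u @ v)"
    by blast
  then show ?thesis by (simp add: presented_group_def)
qed

lemma presented_group_one: "\<one>\<^bsub>presented_group X R\<^esub> = word_class R []"
  by (simp add: presented_group_def)

definition word_inv :: "'x word \<Rightarrow> 'x word" where
  "word_inv w = rev (map (\<lambda>(x, e). (x, \<not> e)) w)"

lemma word_inv_append_cancel: "(word_inv w @ w, []) \<in> word_eq R"
proof (induction w)
  case Nil
  then show ?case by (simp add: word_inv_def word_eq.weq_refl)
next
  case (Cons a w)
  obtain x e where a: "a = (x, e)" by fastforce
  have "(word_inv w @ [(x, \<not> e), (x, \<not> \<not> e)] @ w, word_inv w @ w) \<in> word_eq R"
    by (rule word_eq.weq_cancel)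
  then have "(word_inv (a # w) @ a # w, word_inv w @ w) \<in> word_eq R"
    by (simp add: a word_inv_def)
  then show ?case using Cons by (rule word_eq.weq_trans)
qed

lemma carrier_presented_group:
  "carrier (presented_group X R) = {word_class R w | w. fst ` set w \<subseteq> X}"
  by (simp add: presented_group_def)

lemma group_presented_group: "group (presented_group X R)"
proof (rule groupI)
  let ?G = "presented_group X R"
  fix a b c
  assume a: "a \<in> carrier ?G" and b: "b \<in> carrier ?G" and c: "c \<in> carrier ?G"
  from a obtain u where u: "a = word_class R u" "fst ` set u \<subseteq> X"
    by (auto simp: carrier_presented_group)
  from b obtain v where v: "b = word_class R v" "fst ` set v \<subseteq> X"
    by (auto simp: carrier_presented_group)
  from c obtain w where w: "c = word_class R w"
    by (auto simp: carrier_presented_group)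
  have "fst ` set (u @ v) \<subseteq> X" using u v by auto
  then show "a \<otimes>\<^bsub>?G\<^esub> b \<in> carrier ?G"
    unfolding carrier_presented_group u v presented_group_mult by blast
  show "a \<otimes>\<^bsub>?G\<^esub> b \<otimes>\<^bsub>?G\<^esub> c = a \<otimes>\<^bsub>?G\<^esub> (b \<otimes>\<^bsub>?G\<^esub> c)"
    by (simp add: u v w presented_group_mult)
next
  let ?G = "presented_group X R"
  show "\<one>\<^bsub>?G\<^esub> \<in> carrier ?G"
    unfolding carrier_presented_group presented_group_one by force
  fix a assume "a \<in> carrier ?G"
  then obtain u where u: "a = word_class R u" "fst ` set u \<subseteq> X"
    by (auto simp: carrier_presented_group)
  show "\<one>\<^bsub>?G\<^esub> \<otimes>\<^bsub>?G\<^esub> a = a"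
    by (simp add: u presented_group_mult presented_group_one)
  have "fst ` set (word_inv u) \<subseteq> X" using u(2) by (auto simp: word_inv_def)
  then have "word_class R (word_inv u) \<in> carrier ?G"
    unfolding carrier_presented_group by blast
  moreover have "word_class R (word_inv u) \<otimes>\<^bsub>?G\<^esub> a = \<one>\<^bsub>?G\<^esub>"
    using word_inv_append_cancel[of u R]
    by (simp add: u presented_group_mult presented_group_one word_class_eq_iff)
  ultimately show "\<exists>b\<in>carrier ?G. b \<otimes>\<^bsub>?G\<^esub> a = \<one>\<^bsub>?G\<^esub>" by blast
qed

lemma countable_carrier_presented_group:
  "countable (carrier (presented_group (X :: 'x::countable set) R))"
proof (rule countable_subset)
  show "carrier (presented_group X R) \<subseteq> range (word_class R)"
    unfolding carrier_presented_group by blast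
qed simp

primrec word_eval :: "('g, 'b) monoid_scheme \<Rightarrow> ('x \<Rightarrow> 'g) \<Rightarrow> 'x word \<Rightarrow> 'g" where
  "word_eval G f [] = \<one>\<^bsub>G\<^esub>"
| "word_eval G f (a # w) =
     (if snd a then f (fst a) else inv\<^bsub>G\<^esub> (f (fst a))) \<otimes>\<^bsub>G\<^esub> word_eval G f w"

definition presented_group_lift ::
    "('g, 'b) monoid_scheme \<Rightarrow> ('x \<Rightarrow> 'g) \<Rightarrow> 'x word set \<Rightarrow> 'g" where
  "presented_group_lift G f A = word_eval G f (SOME w. w \<in> A)"

context group
begin

lemma word_eval_closed: "range f \<subseteq> carrier G \<Longrightarrow> word_eval G f w \<in> carrier G"
  by (induction w) auto

lemma word_eval_append:
  "range f \<subseteq> carrier G \<Longrightarrow> word_eval G f (u @ v) = word_eval G f u \<otimes> word_eval G f v"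
  by (induction u) (auto simp: word_eval_closed m_assoc image_subset_iff)

lemma word_eval_word_eq:
  assumes f: "range f \<subseteq> carrier G"
    and R: "\<And>l r. (l, r) \<in> R \<Longrightarrow> word_eval G f l = word_eval G f r"
    and vw: "(v, w) \<in> word_eq R"
  shows "word_eval G f v = word_eval G f w"
  using vw
proof (induction rule: word_eq.induct)
  case (weq_cancel u x e v)
  have "f x \<in> carrier G" "word_eval G f v \<in> carrier G"
    using f word_eval_closed[OF f] by auto
  then have "f x \<otimes> (inv f x \<otimes> word_eval G f v) = word_eval G f v"
    "inv f x \<otimes> (f x \<otimes> word_eval G f v) = word_eval G f v"
    by (simp_all add: m_assoc[symmetric])
  then show ?case using f by (simp add: word_eval_append)
next
  case (weq_rel l r u v)
  then have "word_eval G f l = word_eval G f r" by (rule R)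
  then show ?case using f by (simp add: word_eval_append)
qed auto

lemma presented_group_lift_class:
  assumes "range f \<subseteq> carrier G"
    and "\<And>l r. (l, r) \<in> R \<Longrightarrow> word_eval G f l = word_eval G f r"
  shows "presented_group_lift G f (word_class R w) = word_eval G f w"
proof -
  have "w \<in> word_class R w" by (simp add: word_class_def word_eq.weq_refl)
  then have "(SOME v. v \<in> word_class R w) \<in> word_class R w" by (rule someI)
  then have "(w, SOME v. v \<in> word_class R w) \<in> word_eq R" by (simp add: word_class_def)
  then show ?thesis
    unfolding presented_group_lift_def
    using word_eval_word_eq[OF assms] by metis
qed

end

subsection \<open>Transport of direct finiteness along isomorphisms\<close>

lemma gr_mult_eq_gr_one_iff:
  assumes "monoid G"
  shows "gr_mult G x y = gr_one G \<longleftrightarrow> (\<forall>g\<in>carrier G. gr_mult G x y g = gr_one G g)"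
  using monoid.one_closed[OF assms] by (auto simp: fun_eq_iff gr_mult_def gr_one_def)

lemma group_ring_directly_finite_iso:
  assumes G: "group G" and H: "group H" and iso: "\<phi> \<in> iso G H"
    and DF: "group_ring_directly_finite TYPE('k::division_ring) H"
  shows "group_ring_directly_finite TYPE('k) G"
  unfolding group_ring_directly_finite_def
proof (intro allI impI)
  interpret group_hom G H \<phi>
    using G H iso by (simp add: group_hom_def group_hom_axioms_def iso_def)
  have bij: "bij_betw \<phi> (carrier G) (carrier H)" using iso by (simp add: iso_def)
  then have inj: "inj_on \<phi> (carrier G)" and surj: "carrier H = \<phi> ` carrier G"
    by (simp_all add: bij_betw_def)
  define push where
    "push x g = (if g \<in> carrier H then x (the_inv_into (carrier G) \<phi> g) else 0)"
    for x :: "_ \<Rightarrow> 'k" and g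
  have push_\<phi>: "push x (\<phi> h) = x h" if "h \<in> carrier G" for x h
    using that inj by (simp add: push_def the_inv_into_f_f)
  have supp_push: "{g \<in> carrier H. push x g \<noteq> 0} = \<phi> ` {h \<in> carrier G. x h \<noteq> 0}" for x
    unfolding surj by (auto simp: push_\<phi>)
  have elem: "gr_elem H (push x)" if "gr_elem G x" for x
    using that unfolding gr_elem_def supp_push by (simp add: push_def)
  have mult: "gr_mult H (push x) (push y) (\<phi> b) = gr_mult G x y b" if b: "b \<in> carrier G" for x y b
  proof -
    have "gr_mult H (push x) (push y) (\<phi> b)
        = (\<Sum>h\<in>{h \<in> carrier G. x h \<noteq> 0}. push x (\<phi> h) * push y (inv\<^bsub>H\<^esub> \<phi> h \<otimes>\<^bsub>H\<^esub> \<phi> b))"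
      using b inj by (simp add: gr_mult_def supp_push sum.reindex inj_on_subset)
    also have "\<dots> = gr_mult G x y b"
    proof -
      have "push y (inv\<^bsub>H\<^esub> \<phi> h \<otimes>\<^bsub>H\<^esub> \<phi> b) = y (inv\<^bsub>G\<^esub> h \<otimes>\<^bsub>G\<^esub> b)"
        if h: "h \<in> carrier G" for h
      proof -
        have eq: "inv\<^bsub>H\<^esub> \<phi> h \<otimes>\<^bsub>H\<^esub> \<phi> b = \<phi> (inv\<^bsub>G\<^esub> h \<otimes>\<^bsub>G\<^esub> b)"
          using h b by simp
        have "inv\<^bsub>G\<^esub> h \<otimes>\<^bsub>G\<^esub> b \<in> carrier G" using h b by simp
        then show ?thesis unfolding eq by (rule push_\<phi>)
      qed
      then show ?thesis using b by (auto simp: gr_mult_def push_\<phi> intro!: sum.cong)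
    qed
    finally show ?thesis .
  qed
  have one: "gr_one H (\<phi> b) = gr_one G b" if "b \<in> carrier G" for b
    using inj_on_eq_iff[OF inj that G.one_closed] by (simp add: gr_one_def)
  have eq_one: "gr_mult H (push x) (push y) = gr_one H \<longleftrightarrow> gr_mult G x y = gr_one G" for x y
  proof -
    have "gr_mult H (push x) (push y) = gr_one H \<longleftrightarrow>
        (\<forall>h\<in>carrier G. gr_mult H (push x) (push y) (\<phi> h) = gr_one H (\<phi> h))"
      unfolding gr_mult_eq_gr_one_iff[OF H.monoid_axioms] surj by blast
    also have "\<dots> \<longleftrightarrow> (\<forall>h\<in>carrier G. gr_mult G x y h = gr_one G h)"
      by (intro ball_cong refl) (simp add: mult one)
    also have "\<dots> \<longleftrightarrow> gr_mult G x y = gr_one G"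
      by (rule gr_mult_eq_gr_one_iff[OF G.monoid_axioms, symmetric])
    finally show ?thesis .
  qed
  fix x y :: "_ \<Rightarrow> 'k" assume xy: "gr_elem G x \<and> gr_elem G y \<and> gr_mult G x y = gr_one G"
  then have "gr_mult H (push x) (push y) = gr_one H" by (simp add: eq_one)
  then have "gr_mult H (push y) (push x) = gr_one H"
    using DF xy elem unfolding group_ring_directly_finite_def by blast
  then show "gr_mult G y x = gr_one G" by (simp add: eq_one)
qed

lemma group_ring_directly_finite_countable:
  fixes H :: "'a set monoid"
  assumes inf: "infinite (UNIV :: 'g set)"
    and DF: "\<forall>G :: 'g monoid. group G \<longrightarrow> group_ring_directly_finite TYPE('k::division_ring) G"
    and H: "group H" and count: "countable (carrier H)"
  shows "group_ring_directly_finite TYPE('k) H"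
proof -
  obtain e :: "nat \<Rightarrow> 'g" where e: "inj e"
    using infinite_countable_subset[OF inf] by blast
  obtain c :: "'a set \<Rightarrow> nat" where c: "inj_on c (carrier H)"
    using count by (rule countableE)
  define rep where "rep = e \<circ> c"
  have inj: "inj_on rep (carrier H)"
    unfolding rep_def using c e by (simp add: comp_inj_on inj_on_subset)
  have G: "group (flatten H rep)" by (rule flatten_set_group[OF H inj])
  have iso: "rep \<in> iso H (flatten H rep)"
    using flatten_set_group_hom[OF H inj] inj
    by (simp add: iso_def bij_betw_def flatten_def)
  have "group_ring_directly_finite TYPE('k) (flatten H rep)" using DF G by simp
  then show ?thesis by (rule group_ring_directly_finite_iso[OF H G iso])
qed

subsection \<open>Weighted pushforwards equal to a point mass\<close>

text \<open>By \<open>gr_lincomb_mult_eq_one_iff\<close>, \<open>(\<Sum> r\<^sub>i p\<^sub>i)(\<Sum> s\<^sub>j q\<^sub>j) = 1\<close> in \<open>K[G]\<close> says exactly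
  that the weights \<open>r\<^sub>i s\<^sub>j\<close>, pushed forward along \<open>(i, j) \<mapsto> p\<^sub>i q\<^sub>j\<close>, form the point mass at \<open>\<one>\<close>.\<close>

definition pushforward_delta :: "'a set \<Rightarrow> ('a \<Rightarrow> 'b) \<Rightarrow> ('a \<Rightarrow> 'k::ring_1) \<Rightarrow> 'b \<Rightarrow> bool" where
  "pushforward_delta U f w e \<longleftrightarrow>
     (\<forall>b. (\<Sum>u\<in>U. if f u = b then w u else 0) = (if b = e then 1 else 0))"

lemma pushforward_delta_cong:
  assumes "\<And>u. u \<in> U \<Longrightarrow> f u = f' u" "\<And>u. u \<in> U \<Longrightarrow> w u = w' u"
  shows "pushforward_delta U f w e \<longleftrightarrow> pushforward_delta U f' w' e"
proof -
  have "(\<Sum>u\<in>U. if f u = b then w u else 0) = (\<Sum>u\<in>U. if f' u = b then w' u else 0)" for b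
    using assms by (intro sum.cong) auto
  then show ?thesis by (simp add: pushforward_delta_def)
qed

lemma pushforward_delta_swap:
  "pushforward_delta (A \<times> B) f w e \<longleftrightarrow>
     pushforward_delta (B \<times> A) (f \<circ> prod.swap) (w \<circ> prod.swap) e"
proof -
  have "(\<Sum>u\<in>A \<times> B. if f u = b then w u else 0)
      = (\<Sum>u\<in>B \<times> A. if (f \<circ> prod.swap) u = b then (w \<circ> prod.swap) u else 0)" for b
    by (rule sum.reindex_bij_witness[of _ prod.swap prod.swap]) auto
  then show ?thesis by (simp only: pushforward_delta_def)
qed

lemma pushforward_delta_comp:
  assumes "finite U" and "pushforward_delta U f w e"
  shows "pushforward_delta U (\<phi> \<circ> f) w (\<phi> e)"
  unfolding pushforward_delta_def
proof
  fix b
  have fibre: "(\<Sum>u\<in>U. if f u = c then w u else 0) = (if c = e then 1 else 0)" for c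
    using assms(2) by (simp add: pushforward_delta_def)
  have "e \<in> f ` U"
  proof (rule ccontr)
    assume "e \<notin> f ` U"
    then have "(\<Sum>u\<in>U. if f u = e then w u else 0) = 0" by (intro sum.neutral) auto
    with fibre[of e] show False by simp
  qed
  have "(\<Sum>u\<in>U. if (\<phi> \<circ> f) u = b then w u else 0)
      = (\<Sum>c\<in>f ` U. \<Sum>u\<in>U. if f u = c then (if \<phi> c = b then w u else 0) else 0)"
    using assms(1) by (subst sum.swap) (auto intro!: sum.cong simp: sum.delta_remove)
  also have "\<dots> = (\<Sum>c\<in>f ` U. if \<phi> c = b then (if c = e then 1 else 0) else 0)"
    by (auto intro!: sum.cong simp: fibre[symmetric] if_distrib cong: if_cong)
  also have "\<dots> = (\<Sum>c\<in>f ` U. if c = e then (if \<phi> e = b then 1 else 0) else 0)"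
    by (intro sum.cong) auto
  also have "\<dots> = (if \<phi> e = b then 1 else 0)"
    using \<open>e \<in> f ` U\<close> assms(1) by simp
  finally show "(\<Sum>u\<in>U. if (\<phi> \<circ> f) u = b then w u else 0) = (if b = \<phi> e then 1 else 0)"
    by auto
qed

lemma pushforward_delta_inj_comp:
  assumes c: "inj_on c A" and f: "f ` U \<subseteq> A" and e: "e \<in> A"
    and "pushforward_delta U (c \<circ> f) w (c e)"
  shows "pushforward_delta U f w e"
  unfolding pushforward_delta_def
proof
  fix b
  show "(\<Sum>u\<in>U. if f u = b then w u else 0) = (if b = e then 1 else 0)"
  proof (cases "b \<in> A")
    case True
    then have "(\<Sum>u\<in>U. if f u = b then w u else 0) = (\<Sum>u\<in>U. if c (f u) = c b then w u else 0)"
      using c f by (intro sum.cong) (auto simp: inj_on_eq_iff)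
    also have "\<dots> = (if b = e then 1 else 0)"
      using assms(4) True c e by (simp add: pushforward_delta_def inj_on_eq_iff)
    finally show ?thesis .
  next
    case False
    then show ?thesis using f e by (auto intro!: sum.neutral)
  qed
qed

lemma pushforward_delta_mult_commute:
  fixes a :: "'k::division_ring"
  assumes "a \<noteq> 0"
  shows "pushforward_delta U f (\<lambda>u. a * w u) e \<longleftrightarrow> pushforward_delta U f (\<lambda>u. w u * a) e"
proof -
  have iff: "a * t = d \<longleftrightarrow> t * a = d" if "d = 0 \<or> d = 1" for t d :: 'k
  proof -
    have "a * t = 1 \<longleftrightarrow> t = inverse a"
      using assms inverse_unique by force
    moreover have "t * a = 1 \<longleftrightarrow> t = inverse a"
    proof
      assume "t * a = 1"
      have "t = t * a * inverse a" using assms by (simp add: mult.assoc)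
      also have "\<dots> = inverse a" using \<open>t * a = 1\<close> by simp
      finally show "t = inverse a" .
    qed (use assms in simp)
    ultimately have "a * t = 1 \<longleftrightarrow> t * a = 1" by simp
    then show ?thesis using that assms by auto
  qed
  have "(\<Sum>u\<in>U. if f u = b then a * w u else 0) = a * (\<Sum>u\<in>U. if f u = b then w u else 0)"
    "(\<Sum>u\<in>U. if f u = b then w u * a else 0) = (\<Sum>u\<in>U. if f u = b then w u else 0) * a" for b
    by (auto simp: sum_distrib_left sum_distrib_right intro!: sum.cong)
  then show ?thesis using iff by (simp add: pushforward_delta_def)
qed

lemma pushforward_delta_partition:
  assumes S: "finite S" and Q: "partition_on S Q" and p0: "p0 \<in> S"
    and const: "\<And>E p p'. E \<in> Q \<Longrightarrow> p \<in> E \<Longrightarrow> p' \<in> E \<Longrightarrow> c p = c p'"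
    and block: "\<And>E. E \<in> Q \<Longrightarrow> sum w E = (if p0 \<in> E then 1 else 0)"
  shows "pushforward_delta S c w (c p0)"
  unfolding pushforward_delta_def
proof
  fix b
  obtain E0 where E0: "E0 \<in> Q" "p0 \<in> E0" using Q p0 by (auto simp: partition_on_def)
  have finQ: "finite Q" using S Q by (rule finite_elements)
  have "(\<Sum>p\<in>S. if c p = b then w p else 0) = (\<Sum>E\<in>Q. \<Sum>p\<in>E. if c p = b then w p else 0)"
  proof -
    have "\<forall>E\<in>Q. finite E"
      using partition_onD1[OF Q] finite_subset[OF _ S] by blast
    moreover have "\<forall>E\<in>Q. \<forall>E'\<in>Q. E \<noteq> E' \<longrightarrow> E \<inter> E' = {}"
      using partition_onD2[OF Q] by (auto dest: disjointD)
    ultimately show ?thesis using partition_onD1[OF Q] by (simp add: sum.Union_disjoint)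
  qed
  also have "\<dots> = (\<Sum>E\<in>Q. if E = E0 then (if c p0 = b then 1 else 0) else 0)"
  proof (rule sum.cong[OF refl])
    fix E assume E: "E \<in> Q"
    have E0_iff: "p0 \<in> E \<longleftrightarrow> E = E0"
      using E0 E disjointD[OF partition_onD2[OF Q] E E0(1)] by blast
    show "(\<Sum>p\<in>E. if c p = b then w p else 0) = (if E = E0 then (if c p0 = b then 1 else 0) else 0)"
    proof (cases "\<exists>p\<in>E. c p = b")
      case True
      then have all: "\<forall>p\<in>E. c p = b" using const[OF E] by metis
      then have "(\<Sum>p\<in>E. if c p = b then w p else 0) = sum w E" by simp
      also have "\<dots> = (if E = E0 then 1 else 0)" using block[OF E] E0_iff by simp
      finally show ?thesis using all E0_iff by auto
    next
      case False
      then show ?thesis using E0_iff by (auto intro!: sum.neutral)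
    qed
  qed
  also have "\<dots> = (if b = c p0 then 1 else 0)" using E0 finQ by auto
  finally show "(\<Sum>p\<in>S. if c p = b then w p else 0) = (if b = c p0 then 1 else 0)" .
qed

lemma (in group) pushforward_delta_conj:
  assumes a: "a \<in> carrier G" and f: "f ` U \<subseteq> carrier G"
    and "pushforward_delta U (\<lambda>u. a \<otimes> f u \<otimes> inv a) w \<one>"
  shows "pushforward_delta U f w \<one>"
proof (rule pushforward_delta_inj_comp[OF _ f one_closed])
  show "inj_on (\<lambda>z. a \<otimes> z \<otimes> inv a) (carrier G)"
    using a by (auto intro!: inj_onI)
  show "pushforward_delta U ((\<lambda>z. a \<otimes> z \<otimes> inv a) \<circ> f) w (a \<otimes> \<one> \<otimes> inv a)"
    using assms(3) a by (simp add: comp_def)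
qed

lemma (in group) pushforward_delta_rotate:
  fixes c :: "'k::division_ring"
  assumes a: "a \<in> carrier G" and f: "f ` U \<subseteq> carrier G" and c: "c \<noteq> 0"
  shows "pushforward_delta U (\<lambda>u. a \<otimes> f u) (\<lambda>u. c * w u) \<one> \<longleftrightarrow>
    pushforward_delta U (\<lambda>u. f u \<otimes> a) (\<lambda>u. w u * c) \<one>"
proof -
  have fa: "f u \<in> carrier G" if "u \<in> U" for u using f that by blast
  have conj_a: "pushforward_delta U (\<lambda>u. a \<otimes> (f u \<otimes> a) \<otimes> inv a) W \<one> \<longleftrightarrow>
      pushforward_delta U (\<lambda>u. a \<otimes> f u) W \<one>" for W
    by (rule pushforward_delta_cong) (use a fa in \<open>simp_all add: m_assoc\<close>)
  have conj_inv_a: "pushforward_delta U (\<lambda>u. inv a \<otimes> (a \<otimes> f u) \<otimes> inv (inv a)) W \<one> \<longleftrightarrow>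
      pushforward_delta U (\<lambda>u. f u \<otimes> a) W \<one>" for W
    by (rule pushforward_delta_cong) (use a fa in \<open>simp_all add: m_assoc[symmetric]\<close>)
  show ?thesis
  proof
    assume "pushforward_delta U (\<lambda>u. a \<otimes> f u) (\<lambda>u. c * w u) \<one>"
    then have "pushforward_delta U (\<lambda>u. a \<otimes> f u) (\<lambda>u. w u * c) \<one>"
      using pushforward_delta_mult_commute[OF c, of U "\<lambda>u. a \<otimes> f u" w] by blast
    then have "pushforward_delta U (\<lambda>u. a \<otimes> (f u \<otimes> a) \<otimes> inv a) (\<lambda>u. w u * c) \<one>"
      by (simp only: conj_a)
    note conjugated = this
    show "pushforward_delta U (\<lambda>u. f u \<otimes> a) (\<lambda>u. w u * c) \<one>"
      by (rule pushforward_delta_conj[OF a _ conjugated]) (use a fa in auto)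
  next
    assume "pushforward_delta U (\<lambda>u. f u \<otimes> a) (\<lambda>u. w u * c) \<one>"
    then have "pushforward_delta U (\<lambda>u. f u \<otimes> a) (\<lambda>u. c * w u) \<one>"
      using pushforward_delta_mult_commute[OF c, of U "\<lambda>u. f u \<otimes> a" w] by blast
    then have "pushforward_delta U (\<lambda>u. inv a \<otimes> (a \<otimes> f u) \<otimes> inv (inv a)) (\<lambda>u. c * w u) \<one>"
      by (simp only: conj_inv_a)
    note conjugated = this
    show "pushforward_delta U (\<lambda>u. a \<otimes> f u) (\<lambda>u. c * w u) \<one>"
      by (rule pushforward_delta_conj[OF inv_closed[OF a] _ conjugated]) (use a fa in auto)
  qed
qed

definition gr_lincomb ::
    "('g, 'b) monoid_scheme \<Rightarrow> (nat \<Rightarrow> 'g) \<Rightarrow> (nat \<Rightarrow> 'k::division_ring) \<Rightarrow> nat \<Rightarrow> 'g \<Rightarrow> 'k" where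
  "gr_lincomb G p r m = (\<lambda>g. if g \<in> carrier G then (\<Sum>i<m. if p i = g then r i else 0) else 0)"

lemma gr_lincomb_support: "{g \<in> carrier G. gr_lincomb G p r m g \<noteq> 0} \<subseteq> p ` {..<m}"
proof
  fix g assume "g \<in> {g \<in> carrier G. gr_lincomb G p r m g \<noteq> 0}"
  then have nz: "(\<Sum>i<m. if p i = g then r i else 0) \<noteq> 0"
    by (auto simp: gr_lincomb_def split: if_splits)
  show "g \<in> p ` {..<m}"
  proof (rule ccontr)
    assume "g \<notin> p ` {..<m}"
    then have "(\<Sum>i<m. if p i = g then r i else 0) = 0" by (intro sum.neutral) auto
    with nz show False by contradiction
  qed
qed

lemma gr_elem_gr_lincomb: "gr_elem G (gr_lincomb G p r m)"
proof -
  have "finite {g \<in> carrier G. gr_lincomb G p r m g \<noteq> 0}"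
    by (rule finite_subset[OF gr_lincomb_support]) simp
  then show ?thesis unfolding gr_elem_def by (simp add: gr_lincomb_def)
qed

lemma gr_lincomb_enumeration:
  assumes x: "gr_elem G x" and p: "bij_betw p {..<m} {g \<in> carrier G. x g \<noteq> 0}"
  shows "gr_lincomb G p (x \<circ> p) m = x"
proof
  fix g
  show "gr_lincomb G p (x \<circ> p) m g = x g"
  proof (cases "g \<in> carrier G")
    case True
    have "gr_lincomb G p (x \<circ> p) m g = (\<Sum>i<m. (\<lambda>h. if h = g then x h else 0) (p i))"
      using True by (simp add: gr_lincomb_def comp_def)
    also have "\<dots> = (\<Sum>h\<in>{g \<in> carrier G. x g \<noteq> 0}. if h = g then x h else 0)"
      by (rule sum.reindex_bij_betw[OF p])
    also have "\<dots> = x g" using x True by (simp add: gr_elem_def)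
    finally show ?thesis .
  next
    case False
    then show ?thesis using x by (simp add: gr_lincomb_def gr_elem_def)
  qed
qed

lemma (in group) gr_mult_gr_lincomb:
  assumes p: "p ` {..<m} \<subseteq> carrier G" and q: "q ` {..<n} \<subseteq> carrier G"
    and g: "g \<in> carrier G"
  shows "gr_mult G (gr_lincomb G p r m) (gr_lincomb G q s n) g =
     (\<Sum>(i, j)\<in>{..<m} \<times> {..<n}. if p i \<otimes> q j = g then r i * s j else 0)"
proof -
  let ?x = "gr_lincomb G p r m" and ?y = "gr_lincomb G q s n"
  have "gr_mult G ?x ?y g = (\<Sum>h\<in>p ` {..<m}. ?x h * ?y (inv h \<otimes> g))"
    using g gr_lincomb_support[of G p r m] p
    by (auto simp: gr_mult_def intro!: sum.mono_neutral_left)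
  also have "\<dots> = (\<Sum>h\<in>p ` {..<m}. \<Sum>i<m. if p i = h then r i * ?y (inv h \<otimes> g) else 0)"
  proof (rule sum.cong[OF refl])
    fix h assume "h \<in> p ` {..<m}"
    then have "?x h = (\<Sum>i<m. if p i = h then r i else 0)"
      using p by (auto simp: gr_lincomb_def)
    then show "?x h * ?y (inv h \<otimes> g) = (\<Sum>i<m. if p i = h then r i * ?y (inv h \<otimes> g) else 0)"
      by (simp add: sum_distrib_right) (intro sum.cong refl, auto)
  qed
  also have "\<dots> = (\<Sum>i<m. r i * ?y (inv (p i) \<otimes> g))"
    by (subst sum.swap) (simp add: sum.delta)
  also have "\<dots> = (\<Sum>i<m. \<Sum>j<n. if p i \<otimes> q j = g then r i * s j else 0)"
  proof (rule sum.cong[OF refl])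
    fix i assume "i \<in> {..<m}"
    then have pi: "p i \<in> carrier G" using p by auto
    have "q j = inv (p i) \<otimes> g \<longleftrightarrow> p i \<otimes> q j = g" if "j < n" for j
      using inv_solve_left[of "q j" "p i" g] that q pi g by auto
    then show "r i * ?y (inv (p i) \<otimes> g) = (\<Sum>j<n. if p i \<otimes> q j = g then r i * s j else 0)"
      using pi g by (simp add: gr_lincomb_def sum_distrib_left if_distrib cong: if_cong)
  qed
  also have "\<dots> = (\<Sum>(i, j)\<in>{..<m} \<times> {..<n}. if p i \<otimes> q j = g then r i * s j else 0)"
    by (simp add: sum.cartesian_product)
  finally show ?thesis .
qed

lemma (in group) gr_lincomb_mult_eq_one_iff:
  assumes p: "p ` {..<m} \<subseteq> carrier G" and q: "q ` {..<n} \<subseteq> carrier G"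
  shows "gr_mult G (gr_lincomb G p r m) (gr_lincomb G q s n) = gr_one G \<longleftrightarrow>
     pushforward_delta ({..<m} \<times> {..<n}) (\<lambda>(i, j). p i \<otimes> q j) (\<lambda>(i, j). r i * s j) \<one>"
proof -
  let ?U = "{..<m} \<times> {..<n}"
  have sum_eq: "(\<Sum>u\<in>?U. if (\<lambda>(i, j). p i \<otimes> q j) u = g then (\<lambda>(i, j). r i * s j) u else 0)
      = (\<Sum>(i, j)\<in>?U. if p i \<otimes> q j = g then r i * s j else 0)" for g
    by (intro sum.cong) auto
  have outside: "(\<Sum>(i, j)\<in>?U. if p i \<otimes> q j = g then r i * s j else 0) = 0"
    if "g \<notin> carrier G" for g
    using that p q by (intro sum.neutral) auto
  have "gr_mult G (gr_lincomb G p r m) (gr_lincomb G q s n) = gr_one G \<longleftrightarrow>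
      (\<forall>g\<in>carrier G. (\<Sum>(i, j)\<in>?U. if p i \<otimes> q j = g then r i * s j else 0) = gr_one G g)"
    unfolding gr_mult_eq_gr_one_iff[OF monoid_axioms] using p q by (simp add: gr_mult_gr_lincomb)
  also have "\<dots> \<longleftrightarrow> pushforward_delta ?U (\<lambda>(i, j). p i \<otimes> q j) (\<lambda>(i, j). r i * s j) \<one>"
    unfolding pushforward_delta_def sum_eq gr_one_def using outside by auto
  finally show ?thesis .
qed

lemma (in group) gr_mult_eq_gr_one_support:
  assumes "gr_mult G x y = gr_one G"
  obtains g where "g \<in> carrier G" "x g \<noteq> 0" "y (inv g) \<noteq> 0"
proof -
  have one: "(\<Sum>h\<in>{h \<in> carrier G. x h \<noteq> 0}. x h * y (inv h \<otimes> \<one>)) = 1"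
    using fun_cong[OF assms, of \<one>] by (simp add: gr_mult_def gr_one_def)
  have "\<exists>h\<in>{h \<in> carrier G. x h \<noteq> 0}. x h * y (inv h \<otimes> \<one>) \<noteq> 0"
  proof (rule ccontr)
    assume "\<not> ?thesis"
    then have "(\<Sum>h\<in>{h \<in> carrier G. x h \<noteq> 0}. x h * y (inv h \<otimes> \<one>)) = 0"
      by (intro sum.neutral) blast
    with one show False by simp
  qed
  then show ?thesis using that by auto
qed

lemma ex_enumeration_starting_at:
  assumes "finite A" "a \<in> A"
  obtains p where "bij_betw p {..<card A} A" "p 0 = a"
proof -
  obtain e where e: "bij_betw e {..<card A} A"
    using ex_bij_betw_nat_finite[OF assms(1)] by (auto simp: atLeast0LessThan)
  moreover note \<open>a \<in> A\<close>
  ultimately have "a \<in> e ` {..<card A}" by (simp add: bij_betw_def)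
  then obtain k where k: "k < card A" "e k = a" by blast
  have "bij_betw (e \<circ> Transposition.transpose 0 k) {..<card A} A"
    using k by (intro bij_betw_trans[OF _ e]) simp
  moreover have "(e \<circ> Transposition.transpose 0 k) 0 = a" using k by simp
  ultimately show ?thesis by (rule that)
qed

lemma refines_trans:
  assumes "refines P Q" "refines Q R"
  shows "refines P R"
  unfolding refines_def
proof
  fix E assume "E \<in> P"
  then obtain F where "F \<in> Q" "E \<subseteq> F" using assms(1) by (auto simp: refines_def)
  then obtain H where "H \<in> R" "F \<subseteq> H" using assms(2) by (auto simp: refines_def)
  with \<open>E \<subseteq> F\<close> show "\<exists>H\<in>R. E \<subseteq> H" by blast
qed

lemma ex_minimal_refinement:
  assumes S: "finite S" and P: "partition_on S P" and "C P"
  obtains Q where "partition_on S Q" "C Q" "refines Q P"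
    "\<And>Q'. partition_on S Q' \<Longrightarrow> C Q' \<Longrightarrow> refines Q' Q \<Longrightarrow> Q' = Q"
proof -
  define rel :: "'a set set \<Rightarrow> ('a \<times> 'a) set" where
    "rel Q = {(x, y). \<exists>E\<in>Q. x \<in> E \<and> y \<in> E}" for Q
  let ?K = "\<lambda>Q. partition_on S Q \<and> C Q \<and> refines Q P"
  have "?K P" using P \<open>C P\<close> by (auto simp: refines_def)
  from ex_has_least_nat[of ?K, OF this] obtain Q
    where "?K Q \<and> (\<forall>Q'. ?K Q' \<longrightarrow> card (rel Q) \<le> card (rel Q'))" ..
  then have Q: "?K Q" and least: "\<forall>Q'. ?K Q' \<longrightarrow> card (rel Q) \<le> card (rel Q')"
    by (rule conjunct1, rule conjunct2)
  have "Q' = Q" if Q': "partition_on S Q'" "C Q'" "refines Q' Q" for Q'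
  proof -
    have sub: "rel Q' \<subseteq> rel Q"
    proof (rule subrelI)
      fix x y assume "(x, y) \<in> rel Q'"
      then obtain E where E: "E \<in> Q'" "x \<in> E" "y \<in> E" by (auto simp: rel_def)
      with Q'(3) obtain F where "F \<in> Q" "E \<subseteq> F" by (auto simp: refines_def)
      with E show "(x, y) \<in> rel Q" by (auto simp: rel_def)
    qed
    have "S = \<Union>Q" using Q by (simp add: partition_onD1)
    then have "rel Q \<subseteq> S \<times> S" by (auto simp: rel_def)
    then have fin: "finite (rel Q)"
      by (rule finite_subset) (simp add: S)
    have "refines Q' P" using Q'(3) Q by (blast intro: refines_trans)
    then have "card (rel Q) \<le> card (rel Q')" using least Q' by blast
    with fin sub have "rel Q' = rel Q" by (rule card_seteq)
    moreover have "S // rel Q' = Q'" "S // rel Q = Q"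
      using partition_on_eq_quotient[OF Q'(1)] partition_on_eq_quotient[of S Q] Q
      by (simp_all add: rel_def)
    ultimately show "Q' = Q" by metis
  qed
  then show ?thesis using Q that by blast
qed

definition fibre_partition :: "'a set \<Rightarrow> ('a \<Rightarrow> 'b) \<Rightarrow> 'a set set" where
  "fibre_partition S f = (\<lambda>x. {y \<in> S. f y = f x}) ` S"

lemma partition_on_fibre_partition: "partition_on S (fibre_partition S f)"
  by (rule partition_onI) (auto simp: fibre_partition_def disjnt_def)

subsection \<open>The groups \<open>\<Gamma>\<^sub>\<pi>\<close>\<close>

definition Gamma_a :: "(nat \<times> nat) set set \<Rightarrow> nat \<Rightarrow> (nat + nat) word set" where
  "Gamma_a P i = word_class (Gamma_rels P) [(Inl i, True)]"

definition Gamma_b :: "(nat \<times> nat) set set \<Rightarrow> nat \<Rightarrow> (nat + nat) word set" where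
  "Gamma_b P j = word_class (Gamma_rels P) [(Inr j, True)]"

lemma group_Gamma: "group (Gamma m n P)"
  unfolding Gamma_def by (rule group_presented_group)

lemma countable_carrier_Gamma: "countable (carrier (Gamma m n P))"
  unfolding Gamma_def by (rule countable_carrier_presented_group)

lemma Gamma_a_mult_b:
  "Gamma_a P i \<otimes>\<^bsub>Gamma m n P\<^esub> Gamma_b P j = word_class (Gamma_rels P) [(Inl i, True), (Inr j, True)]"
  by (simp add: Gamma_def Gamma_a_def Gamma_b_def presented_group_mult)

lemma Gamma_b_mult_a:
  "Gamma_b P j \<otimes>\<^bsub>Gamma m n P\<^esub> Gamma_a P i = word_class (Gamma_rels P) [(Inr j, True), (Inl i, True)]"
  by (simp add: Gamma_def Gamma_a_def Gamma_b_def presented_group_mult)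

lemma Gamma_a_in_carrier: "i < m \<Longrightarrow> Gamma_a P i \<in> carrier (Gamma m n P)"
  unfolding Gamma_def Gamma_a_def carrier_presented_group Gamma_gens_def by auto

lemma Gamma_b_in_carrier: "j < n \<Longrightarrow> Gamma_b P j \<in> carrier (Gamma m n P)"
  unfolding Gamma_def Gamma_b_def carrier_presented_group Gamma_gens_def by auto

lemma Gamma_a_zero: "Gamma_a P 0 = \<one>\<^bsub>Gamma m n P\<^esub>"
  unfolding Gamma_def Gamma_a_def presented_group_one
  by (rule word_class_relation) (simp add: Gamma_rels_def)

lemma Gamma_b_zero: "Gamma_b P 0 = \<one>\<^bsub>Gamma m n P\<^esub>"
  unfolding Gamma_def Gamma_b_def presented_group_one
  by (rule word_class_relation) (simp add: Gamma_rels_def)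

lemma Gamma_a_mult_b_block:
  assumes "E \<in> P" "(i, j) \<in> E" "(i', j') \<in> E"
  shows "Gamma_a P i \<otimes>\<^bsub>Gamma m n P\<^esub> Gamma_b P j = Gamma_a P i' \<otimes>\<^bsub>Gamma m n P\<^esub> Gamma_b P j'"
  unfolding Gamma_a_mult_b
  by (rule word_class_relation) (use assms in \<open>auto simp: Gamma_rels_def\<close>)

lemma (in group) word_eval_Gamma_rels:
  assumes f: "range f \<subseteq> carrier G" and "f (Inl 0) = \<one>" "f (Inr 0) = \<one>"
    and block: "\<And>E i j i' j'. E \<in> P \<Longrightarrow> (i, j) \<in> E \<Longrightarrow> (i', j') \<in> E \<Longrightarrow>
                  f (Inl i) \<otimes> f (Inr j) = f (Inl i') \<otimes> f (Inr j')"
    and "(l, r) \<in> Gamma_rels P"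
  shows "word_eval G f l = word_eval G f r"
proof -
  have closed: "f x \<in> carrier G" for x using f by blast
  consider "l = [(Inl 0, True)]" "r = []" | "l = [(Inr 0, True)]" "r = []"
    | E i j i' j' where "l = [(Inl i, True), (Inr j, True)]" "r = [(Inl i', True), (Inr j', True)]"
        "E \<in> P" "(i, j) \<in> E" "(i', j') \<in> E"
    using assms(5) unfolding Gamma_rels_def by blast
  then show ?thesis
  proof cases
    case (3 E i j i' j')
    then have "f (Inl i) \<otimes> f (Inr j) = f (Inl i') \<otimes> f (Inr j')" by (intro block)
    then show ?thesis using 3(1,2) closed by (simp add: m_assoc[symmetric])
  qed (use assms(2,3) in simp_all)
qed

lemma Gamma_lincomb_mult_eq_one:
  assumes P: "partition_on (S_set m n) P" and real: "realizable P r s"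
    and "0 < m" "0 < n"
  shows "gr_mult (Gamma m n P) (gr_lincomb (Gamma m n P) (Gamma_a P) r m)
           (gr_lincomb (Gamma m n P) (Gamma_b P) s n) = gr_one (Gamma m n P)"
proof -
  interpret Gamma: group "Gamma m n P" by (rule group_Gamma)
  let ?c = "\<lambda>(i, j). Gamma_a P i \<otimes>\<^bsub>Gamma m n P\<^esub> Gamma_b P j"
  have "pushforward_delta (S_set m n) ?c (\<lambda>(i, j). r i * s j) (?c (0, 0))"
  proof (rule pushforward_delta_partition[OF _ P])
    show "finite (S_set m n)" "(0, 0) \<in> S_set m n"
      using assms(3,4) by (auto simp: S_set_def)
    show "?c p = ?c p'" if "E \<in> P" "p \<in> E" "p' \<in> E" for E p p'
      using that Gamma_a_mult_b_block by (cases p; cases p') blast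
    show "(\<Sum>(i, j)\<in>E. r i * s j) = (if (0, 0) \<in> E then 1 else 0)" if "E \<in> P" for E
      using real that by (simp add: realizable_def)
  qed
  moreover have "?c (0, 0) = \<one>\<^bsub>Gamma m n P\<^esub>"
    using Gamma_a_zero[of P m n] Gamma_b_zero[of P m n] by simp
  ultimately show ?thesis
    by (simp add: Gamma.gr_lincomb_mult_eq_one_iff Gamma_a_in_carrier Gamma_b_in_carrier
        image_subset_iff Gamma_a_zero Gamma_b_zero S_set_def)
qed

locale normalized_product_one = group G for G :: "('g, 'c) monoid_scheme" (structure) +
  fixes p q :: "nat \<Rightarrow> 'g" and r s :: "nat \<Rightarrow> 'k::division_ring" and m n :: nat
  assumes p_carrier: "p ` {..<m} \<subseteq> carrier G" and q_carrier: "q ` {..<n} \<subseteq> carrier G"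
    and inj_p: "inj_on p {..<m}" and inj_q: "inj_on q {..<n}"
    and r_nonzero: "\<And>i. i < m \<Longrightarrow> r i \<noteq> 0" and s_nonzero: "\<And>j. j < n \<Longrightarrow> s j \<noteq> 0"
    and m_pos: "0 < m" and n_pos: "0 < n"
    and p0_q0: "p 0 \<otimes> q 0 = \<one>"
    and product_one:
      "pushforward_delta ({..<m} \<times> {..<n}) (\<lambda>(i, j). p i \<otimes> q j) (\<lambda>(i, j). r i * s j) \<one>"
begin

lemma p0_carrier: "p 0 \<in> carrier G"
  using p_carrier m_pos by blast

lemma reversed_product_one_if_m_eq_1:
  assumes "m = 1"
  shows "pushforward_delta ({..<n} \<times> {..<m}) (\<lambda>(j, i). q j \<otimes> p i) (\<lambda>(j, i). s j * r i) \<one>"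
proof -
  let ?U = "{..<n} \<times> {..<m}"
  have "pushforward_delta ?U (\<lambda>u. p 0 \<otimes> q (fst u)) (\<lambda>u. r 0 * s (fst u)) \<one>"
    using product_one unfolding pushforward_delta_swap[of "{..<m}"]
    by (subst pushforward_delta_cong) (auto simp: assms)
  then have "pushforward_delta ?U (\<lambda>u. q (fst u) \<otimes> p 0) (\<lambda>u. s (fst u) * r 0) \<one>"
    using q_carrier r_nonzero m_pos by (subst (asm) pushforward_delta_rotate[OF p0_carrier]) auto
  then show ?thesis by (subst pushforward_delta_cong) (auto simp: assms)
qed

lemma reversed_product_one_if_n_eq_1:
  assumes "n = 1"
  shows "pushforward_delta ({..<n} \<times> {..<m}) (\<lambda>(j, i). q j \<otimes> p i) (\<lambda>(j, i). s j * r i) \<one>"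
proof -
  let ?U = "{..<m} \<times> {..<n}"
  have q0: "q 0 \<in> carrier G" using q_carrier n_pos by blast
  have "pushforward_delta ?U (\<lambda>u. p (fst u) \<otimes> q 0) (\<lambda>u. r (fst u) * s 0) \<one>"
    using product_one by (subst pushforward_delta_cong) (auto simp: assms)
  then have "pushforward_delta ?U (\<lambda>u. q 0 \<otimes> p (fst u)) (\<lambda>u. s 0 * r (fst u)) \<one>"
    using p_carrier s_nonzero n_pos by (subst pushforward_delta_rotate[OF q0]) auto
  then show ?thesis
    unfolding pushforward_delta_swap[of "{..<n}"]
    by (subst pushforward_delta_cong) (auto simp: assms)
qed

text \<open>\<open>a\<^sub>i \<mapsto> p\<^sub>i p\<^sub>0\<inverse>\<close> and \<open>b\<^sub>j \<mapsto> p\<^sub>0 q\<^sub>j\<close>, so that \<open>a\<^sub>i b\<^sub>j \<mapsto> p\<^sub>i q\<^sub>j\<close> and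
  \<open>b\<^sub>j a\<^sub>i \<mapsto> p\<^sub>0 (q\<^sub>j p\<^sub>i) p\<^sub>0\<inverse>\<close>. Letters outside the index ranges go to \<open>\<one>\<close>, only to make
  the assignment total.\<close>

definition Gamma_assignment :: "nat + nat \<Rightarrow> 'g" where
  "Gamma_assignment = case_sum (\<lambda>i. if i < m then p i \<otimes> inv (p 0) else \<one>)
     (\<lambda>j. if j < n then p 0 \<otimes> q j else \<one>)"

lemma Gamma_assignment_carrier: "range Gamma_assignment \<subseteq> carrier G"
  using p_carrier q_carrier p0_carrier
  by (auto simp: Gamma_assignment_def image_subset_iff split: sum.split)

lemma realizable_fibre_partition:
  "realizable (fibre_partition (S_set m n) (\<lambda>(i, j). p i \<otimes> q j)) r s"
  unfolding realizable_def
proof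
  let ?v = "\<lambda>(i, j). p i \<otimes> q j" and ?S = "S_set m n"
  fix E assume "E \<in> fibre_partition ?S ?v"
  then obtain x where x: "x \<in> ?S" and E: "E = {y \<in> ?S. ?v y = ?v x}"
    by (auto simp: fibre_partition_def)
  have "(\<Sum>(i, j)\<in>E. r i * s j) = (\<Sum>y\<in>?S. if ?v y = ?v x then (\<lambda>(i, j). r i * s j) y else 0)"
    unfolding E by (simp add: sum.inter_filter S_set_def)
  also have "\<dots> = (if ?v x = \<one> then 1 else 0)"
    using product_one by (simp add: pushforward_delta_def S_set_def)
  also have "\<dots> = (if (0, 0) \<in> E then 1 else 0)"
    using E m_pos n_pos p0_q0 by (auto simp: S_set_def)
  finally show "(\<Sum>(i, j)\<in>E. r i * s j) = (if (0, 0) \<in> E then 1 else 0)" .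
qed

context
  fixes Q :: "(nat \<times> nat) set set"
  assumes Q: "partition_on (S_set m n) Q"
    and Q_refines: "refines Q (fibre_partition (S_set m n) (\<lambda>(i, j). p i \<otimes> q j))"
begin

lemma Gamma_assignment_relations:
  "(l, r') \<in> Gamma_rels Q \<Longrightarrow> word_eval G Gamma_assignment l = word_eval G Gamma_assignment r'"
proof (rule word_eval_Gamma_rels[OF Gamma_assignment_carrier])
  show "Gamma_assignment (Inl 0) = \<one>" "Gamma_assignment (Inr 0) = \<one>"
    using m_pos n_pos p0_q0 p0_carrier by (simp_all add: Gamma_assignment_def)
  fix E i j i' j' assume E: "E \<in> Q" "(i, j) \<in> E" "(i', j') \<in> E"
  then obtain F where F: "F \<in> fibre_partition (S_set m n) (\<lambda>(i, j). p i \<otimes> q j)" "E \<subseteq> F"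
    using Q_refines by (auto simp: refines_def)
  then obtain x where "F = {y \<in> S_set m n. (\<lambda>(i, j). p i \<otimes> q j) y = (\<lambda>(i, j). p i \<otimes> q j) x}"
    by (auto simp: fibre_partition_def)
  moreover have "(i, j) \<in> F" "(i', j') \<in> F" using E F(2) by blast+
  ultimately have "p i \<otimes> q j = p i' \<otimes> q j'" by simp
  moreover have "i < m" "j < n" "i' < m" "j' < n"
    using E partition_onD1[OF Q] by (auto simp: S_set_def)
  ultimately show "Gamma_assignment (Inl i) \<otimes> Gamma_assignment (Inr j)
      = Gamma_assignment (Inl i') \<otimes> Gamma_assignment (Inr j')"
    using p_carrier q_carrier p0_carrier
    by (simp add: Gamma_assignment_def m_assoc[symmetric] image_subset_iff)
      (simp add: m_assoc)
qed

lemma Gamma_lift_class: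
  "presented_group_lift G Gamma_assignment (word_class (Gamma_rels Q) w)
     = word_eval G Gamma_assignment w"
  using Gamma_assignment_carrier Gamma_assignment_relations by (rule presented_group_lift_class)

lemma nondegenerate_refinement: "nondegenerate m n Q"
  unfolding nondegenerate_def
proof (intro conjI allI impI notI)
  fix i i' assume i: "i < m" "i' < m" "i \<noteq> i'"
    and "word_class (Gamma_rels Q) [(Inl i, True)] = word_class (Gamma_rels Q) [(Inl i', True)]"
  then have "p i \<otimes> inv (p 0) = p i' \<otimes> inv (p 0)"
    using Gamma_lift_class[of "[(Inl i, True)]"] Gamma_lift_class[of "[(Inl i', True)]"]
      p_carrier p0_carrier by (simp add: Gamma_assignment_def image_subset_iff)
  then have "p i = p i'" using i p_carrier p0_carrier by (simp add: image_subset_iff)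
  then show False using i inj_p by (simp add: inj_on_def)
next
  fix j j' assume j: "j < n" "j' < n" "j \<noteq> j'"
    and "word_class (Gamma_rels Q) [(Inr j, True)] = word_class (Gamma_rels Q) [(Inr j', True)]"
  then have "p 0 \<otimes> q j = p 0 \<otimes> q j'"
    using Gamma_lift_class[of "[(Inr j, True)]"] Gamma_lift_class[of "[(Inr j', True)]"]
      q_carrier p0_carrier by (simp add: Gamma_assignment_def image_subset_iff)
  then have "q j = q j'" using j q_carrier p0_carrier by (simp add: image_subset_iff)
  then show False using j inj_q by (simp add: inj_on_def)
qed

end

lemma reversed_product_one_via_Gamma:
  assumes ULIE: "\<forall>m n P. ULIE_partition TYPE('k) m n P \<longrightarrow>
      group_ring_directly_finite TYPE('k) (Gamma m n P)"
    and "2 \<le> m" "2 \<le> n"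
  shows "pushforward_delta ({..<n} \<times> {..<m}) (\<lambda>(j, i). q j \<otimes> p i) (\<lambda>(j, i). s j * r i) \<one>"
proof -
  let ?S = "S_set m n" and ?v = "\<lambda>(i, j). p i \<otimes> q j" and ?U = "{..<n} \<times> {..<m}"
  obtain Q where Q: "partition_on ?S Q" "realizable Q r s" "refines Q (fibre_partition ?S ?v)"
    and Q_min: "\<And>Q'. partition_on ?S Q' \<Longrightarrow> realizable Q' r s \<Longrightarrow> refines Q' Q \<Longrightarrow> Q' = Q"
    using ex_minimal_refinement[of ?S "fibre_partition ?S ?v" "\<lambda>Q. realizable Q r s"]
      partition_on_fibre_partition realizable_fibre_partition by (auto simp: S_set_def)
  let ?\<Gamma> = "Gamma m n Q" and ?a = "Gamma_a Q" and ?b = "Gamma_b Q"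
  interpret \<Gamma>: group ?\<Gamma> by (rule group_Gamma)
  have "ULIE_partition TYPE('k) m n Q"
    unfolding ULIE_partition_def minimally_realizable_def
    using assms(2,3) Q Q_min r_nonzero s_nonzero nondegenerate_refinement[OF Q(1,3)] by blast
  then have DF: "group_ring_directly_finite TYPE('k) ?\<Gamma>" using ULIE by blast
  have "gr_mult ?\<Gamma> (gr_lincomb ?\<Gamma> ?a r m) (gr_lincomb ?\<Gamma> ?b s n) = gr_one ?\<Gamma>"
    using Gamma_lincomb_mult_eq_one[OF Q(1,2) m_pos n_pos] .
  then have "gr_mult ?\<Gamma> (gr_lincomb ?\<Gamma> ?b s n) (gr_lincomb ?\<Gamma> ?a r m) = gr_one ?\<Gamma>"
    using DF gr_elem_gr_lincomb unfolding group_ring_directly_finite_def by blast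
  then have "pushforward_delta ?U (\<lambda>(j, i). ?b j \<otimes>\<^bsub>?\<Gamma>\<^esub> ?a i) (\<lambda>(j, i). s j * r i) \<one>\<^bsub>?\<Gamma>\<^esub>"
    by (simp add: \<Gamma>.gr_lincomb_mult_eq_one_iff image_subset_iff
        Gamma_a_in_carrier Gamma_b_in_carrier)
  then have "pushforward_delta ?U
      (presented_group_lift G Gamma_assignment \<circ> (\<lambda>(j, i). ?b j \<otimes>\<^bsub>?\<Gamma>\<^esub> ?a i))
      (\<lambda>(j, i). s j * r i) (presented_group_lift G Gamma_assignment \<one>\<^bsub>?\<Gamma>\<^esub>)"
    by (rule pushforward_delta_comp[rotated]) simp
  moreover have "presented_group_lift G Gamma_assignment \<one>\<^bsub>?\<Gamma>\<^esub> = \<one>"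
    using Gamma_lift_class[OF Q(1,3), of "[]"] by (simp add: Gamma_def presented_group_one)
  moreover have "presented_group_lift G Gamma_assignment (?b j \<otimes>\<^bsub>?\<Gamma>\<^esub> ?a i)
      = p 0 \<otimes> (q j \<otimes> p i) \<otimes> inv (p 0)" if "j < n" "i < m" for i j
    using that Gamma_lift_class[OF Q(1,3)] p_carrier q_carrier p0_carrier
    by (simp add: Gamma_b_mult_a Gamma_assignment_def image_subset_iff m_assoc)
  ultimately have "pushforward_delta ?U (\<lambda>u. p 0 \<otimes> (\<lambda>(j, i). q j \<otimes> p i) u \<otimes> inv (p 0))
      (\<lambda>(j, i). s j * r i) \<one>"
    by (subst (asm) pushforward_delta_cong) auto
  then show ?thesis
    by (rule pushforward_delta_conj[OF p0_carrier, rotated]) (use p_carrier q_carrier in auto)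
qed

end

lemma group_ring_directly_finite_of_ULIE:
  fixes G :: "('g, 'c) monoid_scheme" (structure)
  assumes ULIE: "\<forall>m n P. ULIE_partition TYPE('k::division_ring) m n P \<longrightarrow>
      group_ring_directly_finite TYPE('k) (Gamma m n P)"
    and "group G"
  shows "group_ring_directly_finite TYPE('k) G"
  unfolding group_ring_directly_finite_def
proof (intro allI impI)
  interpret group G by fact
  fix x y :: "'g \<Rightarrow> 'k"
  assume "gr_elem G x \<and> gr_elem G y \<and> gr_mult G x y = gr_one G"
  then have x: "gr_elem G x" and y: "gr_elem G y" and xy: "gr_mult G x y = gr_one G" by auto
  let ?A = "{g \<in> carrier G. x g \<noteq> 0}" and ?B = "{g \<in> carrier G. y g \<noteq> 0}"
  have finA: "finite ?A" and finB: "finite ?B" using x y by (simp_all add: gr_elem_def)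
  obtain g0 where "g0 \<in> carrier G" "x g0 \<noteq> 0" "y (inv g0) \<noteq> 0"
    using gr_mult_eq_gr_one_support[OF xy] .
  then have g0: "g0 \<in> ?A" "inv g0 \<in> ?B" by simp_all
  obtain p where p: "bij_betw p {..<card ?A} ?A" "p 0 = g0"
    using ex_enumeration_starting_at[OF finA g0(1)] .
  obtain q where q: "bij_betw q {..<card ?B} ?B" "q 0 = inv g0"
    using ex_enumeration_starting_at[OF finB g0(2)] .
  define m n where "m = card ?A" and "n = card ?B"
  have x_eq: "gr_lincomb G p (x \<circ> p) m = x" and y_eq: "gr_lincomb G q (y \<circ> q) n = y"
    using gr_lincomb_enumeration x y p(1) q(1) by (auto simp: m_def n_def)
  have p_carrier: "p ` {..<m} \<subseteq> carrier G" and q_carrier: "q ` {..<n} \<subseteq> carrier G"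
    using p(1) q(1) by (auto simp: m_def n_def bij_betw_def)
  have "0 < m" "0 < n"
    using finA finB g0 by (auto simp: m_def n_def card_gt_0_iff)
  interpret normalized_product_one G p q "x \<circ> p" "y \<circ> q" m n
  proof
    show "pushforward_delta ({..<m} \<times> {..<n}) (\<lambda>(i, j). p i \<otimes> q j)
        (\<lambda>(i, j). (x \<circ> p) i * (y \<circ> q) j) \<one>"
      using gr_lincomb_mult_eq_one_iff[OF p_carrier q_carrier, of "x \<circ> p" "y \<circ> q"] xy
      unfolding x_eq y_eq by blast
  qed (use p q g0 \<open>0 < m\<close> \<open>0 < n\<close> p_carrier q_carrier in
    \<open>auto simp: m_def n_def bij_betw_def\<close>)
  have "pushforward_delta ({..<n} \<times> {..<m}) (\<lambda>(j, i). q j \<otimes> p i)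
      (\<lambda>(j, i). (y \<circ> q) j * (x \<circ> p) i) \<one>"
  proof (cases "m = 1 \<or> n = 1")
    case True
    then show ?thesis using reversed_product_one_if_m_eq_1 reversed_product_one_if_n_eq_1 by blast
  next
    case False
    with \<open>0 < m\<close> \<open>0 < n\<close> have "2 \<le> m" "2 \<le> n" by auto
    with ULIE show ?thesis by (rule reversed_product_one_via_Gamma)
  qed
  then show "gr_mult G y x = gr_one G"
    using gr_lincomb_mult_eq_one_iff[OF q_carrier p_carrier, of "y \<circ> q" "x \<circ> p"]
    unfolding x_eq y_eq by blast
qed

theorem corollary4p15:
  assumes "infinite (UNIV :: 'g set)"
  shows "(\<forall>G :: 'g monoid. group G \<longrightarrow> group_ring_directly_finite TYPE('k::division_ring) G)
     \<longleftrightarrow> (\<forall>m n P. ULIE_partition TYPE('k) m n P \<longrightarrow>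
             group_ring_directly_finite TYPE('k) (Gamma m n P))"
proof
  assume "\<forall>G :: 'g monoid. group G \<longrightarrow> group_ring_directly_finite TYPE('k) G"
  then show "\<forall>m n P. ULIE_partition TYPE('k) m n P \<longrightarrow>
      group_ring_directly_finite TYPE('k) (Gamma m n P)"
    using group_ring_directly_finite_countable[OF assms _ group_Gamma countable_carrier_Gamma]
    by blast
next
  assume "\<forall>m n P. ULIE_partition TYPE('k) m n P \<longrightarrow>
      group_ring_directly_finite TYPE('k) (Gamma m n P)"
  then show "\<forall>G :: 'g monoid. group G \<longrightarrow> group_ring_directly_finite TYPE('k) G"
    using group_ring_directly_finite_of_ULIE by blast
qed

end
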